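(* For every $n\geq1$, the number of $\mathcal{B}_n$-orbits of acute $0/1$-triangles in $[0,1]^n$ equals $$\left\lfloor\frac{2n^3+3n^2-6n+9}{72}\right\rfloor.$$
   Context: A $0/1$-triangle in $[0,1]^n$ is the convex hull of three distinct points of $\{0,1\}^n$; it is acute if all three of its angles are strictly less than $\pi/2$. $\mathcal{B}_n$ is the hyperoctahedral group of symmetries of $[0,1]^n$ (acting on $\{0,1\}^n$ by coordinate permutations combined with complementation of a subset of coordinates); two triangles are counted as the same if one is mapped onto the other by an element of $\mathcal{B}_n$. *)

theory Defs
  imports "HOL-Analysis.Analysis"
begin

text \<open>The cube vertices {0,1}^n, with n = CARD('n).\<close>
definition cube_vertices :: "(real ^ 'n) set" where
  "cube_vertices = {x. \<forall>i. x $ i = 0 \<or> x $ i = 1}"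

definition vertex_angle :: "real ^ 'n \<Rightarrow> real ^ 'n \<Rightarrow> real ^ 'n \<Rightarrow> real" where
  "vertex_angle v a b = arccos (((a - v) \<bullet> (b - v)) / (norm (a - v) * norm (b - v)))"

definition zo_triangle :: "(real ^ 'n) set \<Rightarrow> bool" where
  "zo_triangle T \<longleftrightarrow> (\<exists>a b c. a \<in> cube_vertices \<and> b \<in> cube_vertices \<and> c \<in> cube_vertices
      \<and> a \<noteq> b \<and> b \<noteq> c \<and> a \<noteq> c \<and> T = convex hull {a, b, c})"

definition acute_zo_triangle :: "(real ^ 'n) set \<Rightarrow> bool" where
  "acute_zo_triangle T \<longleftrightarrow> (\<exists>a b c. a \<in> cube_vertices \<and> b \<in> cube_vertices \<and> c \<in> cube_vertices
      \<and> a \<noteq> b \<and> b \<noteq> c \<and> a \<noteq> c \<and> T = convex hull {a, b, c}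
      \<and> vertex_angle a b c < pi / 2 \<and> vertex_angle b a c < pi / 2 \<and> vertex_angle c a b < pi / 2)"

definition hyperoct_map :: "('n \<Rightarrow> 'n) \<Rightarrow> 'n set \<Rightarrow> real ^ 'n \<Rightarrow> real ^ 'n" where
  "hyperoct_map \<sigma> C x = (\<chi> i. if i \<in> C then 1 - x $ (\<sigma> i) else x $ (\<sigma> i))"

definition hyperoctahedral_group :: "(real ^ 'n \<Rightarrow> real ^ 'n) set" where
  "hyperoctahedral_group = {hyperoct_map \<sigma> C | \<sigma> C. \<sigma> permutes (UNIV :: 'n set)}"

definition Bn_orbit :: "(real ^ 'n) set \<Rightarrow> (real ^ 'n) set set" where
  "Bn_orbit T = {g ` T | g. g \<in> hyperoctahedral_group}"

end

(*
  For cube vertices a, b, c the inner product (b - a) . (c - a) counts the coordinates in which a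
  differs from both b and c, so the angle at a is acute exactly when such a coordinate exists.
  In every coordinate either the three vertices agree or exactly one of them is the odd one out.
  A coordinate permutation matching these labels, followed by complementing the coordinates where
  the first vertices disagree, maps one triangle onto another as soon as the numbers x, y, z of
  coordinates singling out each vertex agree; conversely these numbers are invariant, because B_n
  maps cube vertices to cube vertices and a 0/1-triangle meets the cube only in its vertices.
  Hence the orbits of acute triangles correspond to multisets {x, y, z} of positive integers with
  x + y + z <= n, and counting these by whether the smallest part is 1 gives a recursion in steps
  of 3 whose solution is the cubic formula.
*)

theory Submission
  imports Defs "HOL-Library.Multiset"
begin

section \<open>Cube vertices and angles\<close>

lemma cube_vertex_coord: "x \<in> cube_vertices \<Longrightarrow> x $ i = 0 \<or> x $ i = 1"
  by (simp add: cube_vertices_def)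

lemma vertex_angle_less_pi_half_iff:
  fixes v a b :: "real ^ 'n"
  assumes "a \<noteq> v" "b \<noteq> v"
  shows "vertex_angle v a b < pi / 2 \<longleftrightarrow> 0 < (a - v) \<bullet> (b - v)"
proof -
  define d where "d = norm (a - v) * norm (b - v)"
  have "0 < d" using assms by (simp add: d_def)
  define x where "x = ((a - v) \<bullet> (b - v)) / d"
  have "\<bar>(a - v) \<bullet> (b - v)\<bar> \<le> d" unfolding d_def by (rule Cauchy_Schwarz_ineq2)
  then have "\<bar>x\<bar> \<le> 1" using \<open>0 < d\<close> by (simp add: x_def abs_divide)
  then have "vertex_angle v a b < pi / 2 \<longleftrightarrow> 0 < x"
    using arccos_less_mono[of x 0] by (simp add: vertex_angle_def x_def d_def)
  also have "\<dots> \<longleftrightarrow> 0 < (a - v) \<bullet> (b - v)"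
    using \<open>0 < d\<close> by (simp add: x_def zero_less_divide_iff)
  finally show ?thesis .
qed

lemma inner_cube_vertices:
  assumes "a \<in> cube_vertices" "b \<in> cube_vertices" "c \<in> cube_vertices"
  shows "(b - a) \<bullet> (c - a) = real (card {i. a $ i \<noteq> b $ i \<and> a $ i \<noteq> c $ i})"
proof -
  have "(b - a) \<bullet> (c - a) = (\<Sum>i\<in>UNIV. if a $ i \<noteq> b $ i \<and> a $ i \<noteq> c $ i then 1 else 0)"
    unfolding inner_vec_def
  proof (rule sum.cong[OF refl])
    fix i
    show "(b - a) $ i \<bullet> (c - a) $ i = (if a $ i \<noteq> b $ i \<and> a $ i \<noteq> c $ i then 1 else 0)"
      using assms[THEN cube_vertex_coord, of i] by auto
  qed
  then show ?thesis by (simp add: sum.If_cases)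
qed

lemma cube_vertex_in_convex_hull:
  fixes S :: "(real ^ 'n) set"
  assumes "S \<subseteq> cube_vertices" "x \<in> cube_vertices" "x \<in> convex hull S"
  shows "x \<in> S"
proof (rule ccontr)
  assume "x \<notin> S"
  \<comment> \<open>\<open>w \<bullet> (x - y)\<close> is the Hamming distance of \<open>x\<close> and \<open>y\<close>, so \<open>x\<close> is the unique maximiser of \<open>w\<close> on the cube.\<close>
  define w :: "real ^ 'n" where "w = (\<chi> i. 2 * x $ i - 1)"
  have "w \<bullet> y \<le> w \<bullet> x - 1" if "y \<in> S" for y
  proof -
    have y: "y \<in> cube_vertices" "y \<noteq> x" using that assms(1) \<open>x \<notin> S\<close> by auto
    have "w \<bullet> (x - y) = (\<Sum>i\<in>UNIV. if x $ i \<noteq> y $ i then 1 else 0)"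
      unfolding inner_vec_def
    proof (rule sum.cong[OF refl])
      fix i
      show "w $ i \<bullet> (x - y) $ i = (if x $ i \<noteq> y $ i then 1 else 0)"
        using cube_vertex_coord[OF assms(2), of i] cube_vertex_coord[OF y(1), of i] by (auto simp: w_def)
    qed
    also have "\<dots> = real (card {i. x $ i \<noteq> y $ i})" by (simp add: sum.If_cases)
    also have "\<dots> \<ge> 1" using y(2) by (auto simp: vec_eq_iff card_gt_0_iff Suc_le_eq) metis
    finally show ?thesis by (simp add: inner_diff_right)
  qed
  then have "convex hull S \<subseteq> {y. w \<bullet> y \<le> w \<bullet> x - 1}"
    by (intro hull_minimal) (auto simp: convex_halfspace_le)
  then show False using assms(3) by auto
qed

lemma convex_hull_Int_cube_vertices:
  "S \<subseteq> cube_vertices \<Longrightarrow> convex hull S \<inter> cube_vertices = S"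
  by (auto intro: cube_vertex_in_convex_hull hull_inc)

section \<open>The hyperoctahedral group\<close>

lemma hyperoct_map_nth [simp]:
  "hyperoct_map \<sigma> C x $ i = (if i \<in> C then 1 - x $ \<sigma> i else x $ \<sigma> i)"
  by (simp add: hyperoct_map_def)

lemma hyperoct_map_nth_eq_iff:
  "hyperoct_map \<sigma> C x $ i = hyperoct_map \<sigma> C y $ i \<longleftrightarrow> x $ \<sigma> i = y $ \<sigma> i"
  by auto

lemma inj_hyperoct_map:
  assumes "\<sigma> permutes UNIV"
  shows "inj (hyperoct_map \<sigma> C)"
proof (rule injI)
  fix x y assume "hyperoct_map \<sigma> C x = hyperoct_map \<sigma> C y"
  then have "x $ \<sigma> i = y $ \<sigma> i" for i by (metis hyperoct_map_nth_eq_iff)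
  then show "x = y" using permutes_surj[OF assms] by (metis vec_eq_iff surjD)
qed

lemma hyperoctahedral_group_cube_vertices:
  "g \<in> hyperoctahedral_group \<Longrightarrow> x \<in> cube_vertices \<Longrightarrow> g x \<in> cube_vertices"
  unfolding hyperoctahedral_group_def cube_vertices_def by force

lemma hyperoctahedral_group_image_convex_hull:
  fixes g :: "real ^ 'n \<Rightarrow> real ^ 'n"
  assumes "g \<in> hyperoctahedral_group"
  shows "g ` (convex hull S) = convex hull (g ` S)"
proof -
  obtain \<sigma> C where g: "g = hyperoct_map \<sigma> C"
    using assms unfolding hyperoctahedral_group_def by blast
  define k :: "real ^ 'n" where "k = (\<chi> i. if i \<in> C then 1 else 0)"
  define f :: "real ^ 'n \<Rightarrow> real ^ 'n" where "f x = (\<chi> i. if i \<in> C then - x $ \<sigma> i else x $ \<sigma> i)" for x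
  have "linear f" by (rule linearI) (auto simp: f_def vec_eq_iff)
  have affine: "g = (\<lambda>x. k + x) \<circ> f"
    by (auto simp: g fun_eq_iff vec_eq_iff k_def f_def)
  show ?thesis
    unfolding affine image_comp[symmetric]
    by (simp add: convex_hull_linear_image[OF \<open>linear f\<close>] convex_hull_translation)
qed

lemma hyperoctahedral_group_comp:
  assumes "g \<in> hyperoctahedral_group" "h \<in> hyperoctahedral_group"
  shows "g \<circ> h \<in> hyperoctahedral_group"
proof -
  obtain \<sigma> C \<tau> D where "\<sigma> permutes UNIV" "\<tau> permutes UNIV"
    and "g = hyperoct_map \<sigma> C" "h = hyperoct_map \<tau> D"
    using assms unfolding hyperoctahedral_group_def by blast
  moreover have "hyperoct_map \<sigma> C \<circ> hyperoct_map \<tau> D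
      = hyperoct_map (\<tau> \<circ> \<sigma>) {i. (i \<in> C) \<noteq> (\<sigma> i \<in> D)}"
    by (auto simp: fun_eq_iff vec_eq_iff)
  ultimately show ?thesis
    unfolding hyperoctahedral_group_def by (blast intro: permutes_compose)
qed

lemma id_in_hyperoctahedral_group: "id \<in> hyperoctahedral_group"
proof -
  have "id = hyperoct_map id {}" by (auto simp: fun_eq_iff vec_eq_iff)
  then show ?thesis unfolding hyperoctahedral_group_def by (blast intro: permutes_id)
qed

lemma self_in_Bn_orbit: "T \<in> Bn_orbit T"
proof -
  have "T = id ` T" by simp
  then show ?thesis unfolding Bn_orbit_def using id_in_hyperoctahedral_group by blast
qed

lemma Bn_orbit_image_subset:
  assumes "g \<in> hyperoctahedral_group"
  shows "Bn_orbit (g ` T) \<subseteq> Bn_orbit T"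
proof
  fix X assume "X \<in> Bn_orbit (g ` T)"
  then obtain h where "h \<in> hyperoctahedral_group" "X = (h \<circ> g) ` T"
    unfolding Bn_orbit_def by (auto simp: image_comp)
  then show "X \<in> Bn_orbit T"
    unfolding Bn_orbit_def using hyperoctahedral_group_comp assms by blast
qed

section \<open>Private coordinates\<close>

definition private_coords :: "(real ^ 'n) set \<Rightarrow> real ^ 'n \<Rightarrow> 'n set" where
  "private_coords S v = {i. \<forall>u \<in> S - {v}. v $ i \<noteq> u $ i}"

definition private_profile :: "(real ^ 'n) set \<Rightarrow> nat multiset" where
  "private_profile S = image_mset (\<lambda>v. card (private_coords S v)) (mset_set S)"

lemma private_coords_hyperoct_map:
  fixes \<sigma> :: "'n::finite \<Rightarrow> 'n"
  assumes "\<sigma> permutes UNIV"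
  shows "private_coords (hyperoct_map \<sigma> C ` S) (hyperoct_map \<sigma> C v) = \<sigma> -` private_coords S v"
proof -
  have "hyperoct_map \<sigma> C ` S - {hyperoct_map \<sigma> C v} = hyperoct_map \<sigma> C ` (S - {v})"
    using image_set_diff[OF inj_hyperoct_map[OF assms], where A = S and B = "{v}"] by simp
  then show ?thesis
    by (simp add: private_coords_def hyperoct_map_nth_eq_iff del: hyperoct_map_nth)
qed

lemma private_profile_hyperoctahedral_image:
  assumes "g \<in> hyperoctahedral_group" "finite S"
  shows "private_profile (g ` S) = private_profile S"
proof -
  obtain \<sigma> C where \<sigma>: "\<sigma> permutes UNIV" and g: "g = hyperoct_map \<sigma> C"
    using assms(1) unfolding hyperoctahedral_group_def by blast
  have "card (private_coords (g ` S) (g v)) = card (private_coords S v)" for v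
    using private_coords_hyperoct_map[OF \<sigma>] permutes_inj[OF \<sigma>] permutes_surj[OF \<sigma>]
    by (simp add: g card_vimage_inj)
  moreover have "mset_set (g ` S) = image_mset g (mset_set S)"
    using image_mset_mset_set[OF inj_on_subset[OF inj_hyperoct_map[OF \<sigma>]]] by (simp add: g)
  ultimately show ?thesis
    by (simp add: private_profile_def multiset.map_comp o_def)
qed

lemma private_coords_triangle:
  assumes "a \<noteq> b" "b \<noteq> c" "a \<noteq> c"
  shows "private_coords {a, b, c} a = {i. a $ i \<noteq> b $ i \<and> a $ i \<noteq> c $ i}"
    and "private_coords {a, b, c} b = {i. b $ i \<noteq> a $ i \<and> b $ i \<noteq> c $ i}"
    and "private_coords {a, b, c} c = {i. c $ i \<noteq> a $ i \<and> c $ i \<noteq> b $ i}"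
  using assms by (auto simp: private_coords_def)

lemma private_profile_triangle:
  assumes "a \<noteq> b" "b \<noteq> c" "a \<noteq> c"
  shows "private_profile {a, b, c} = {#card (private_coords {a, b, c} a),
    card (private_coords {a, b, c} b), card (private_coords {a, b, c} c)#}"
  using assms by (simp add: private_profile_def)

lemma private_coords_disjoint:
  assumes "S \<subseteq> cube_vertices" "{u, v, w} \<subseteq> S" "u \<noteq> v" "v \<noteq> w" "u \<noteq> w"
  shows "private_coords S u \<inter> private_coords S v = {}"
proof -
  have "u $ i = v $ i \<or> u $ i = w $ i \<or> v $ i = w $ i" for i
    using assms(1,2) cube_vertex_coord by (metis insert_subset subset_iff)
  then show ?thesis using assms(2-5) by (auto simp: private_coords_def)
qed

section \<open>Orbits of 0/1-triangles\<close>

lemma card_fibre_eq_if_other_fibres_eq: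
  fixes L L' :: "'a::finite \<Rightarrow> 'b::finite"
  assumes "\<And>k. k \<noteq> k0 \<Longrightarrow> card {i. L i = k} = card {i. L' i = k}"
  shows "card {i. L i = k0} = card {i. L' i = k0}"
proof -
  have total: "CARD('a) = card {i. M i = k0} + (\<Sum>k\<in>UNIV - {k0}. card {i. M i = k})"
    for M :: "'a \<Rightarrow> 'b"
  proof -
    have "CARD('a) = (\<Sum>k\<in>UNIV. card {i. M i = k})"
      using sum.group[of UNIV UNIV M "\<lambda>_. 1 :: nat"] by simp
    also have "\<dots> = card {i. M i = k0} + (\<Sum>k\<in>UNIV - {k0}. card {i. M i = k})"
      by (simp add: sum.remove)
    finally show ?thesis .
  qed
  have "(\<Sum>k\<in>UNIV - {k0}. card {i. L i = k}) = (\<Sum>k\<in>UNIV - {k0}. card {i. L' i = k})"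
    using assms by (intro sum.cong) auto
  then show ?thesis using total[of L] total[of L'] by linarith
qed

lemma exists_permutes_fibres:
  fixes L L' :: "'a::finite \<Rightarrow> 'b"
  assumes "\<And>k. card {i. L i = k} = card {i. L' i = k}"
  obtains \<sigma> where "\<sigma> permutes UNIV" "\<And>i. L (\<sigma> i) = L' i"
proof -
  have "\<forall>k. \<exists>f. bij_betw f {i. L' i = k} {i. L i = k}"
    using assms by (metis finite finite_same_card_bij)
  then obtain f where f: "\<And>k. bij_betw (f k) {i. L' i = k} {i. L i = k}" by metis
  define \<sigma> where "\<sigma> i = f (L' i) i" for i
  have L: "L (\<sigma> i) = L' i" for i
    using bij_betwE[OF f[of "L' i"]] by (auto simp: \<sigma>_def)
  have "inj \<sigma>"
  proof (rule injI)
    fix i j assume "\<sigma> i = \<sigma> j"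
    moreover from this have "L' i = L' j" using L by metis
    ultimately show "i = j"
      using bij_betw_imp_inj_on[OF f[of "L' i"]] by (auto simp: \<sigma>_def inj_on_def)
  qed
  then have "bij \<sigma>" by (simp add: bij_def finite_UNIV_inj_surj)
  then have "\<sigma> permutes UNIV" by (auto intro: bij_imp_permutes)
  then show thesis using L by (rule that)
qed

lemma private_coords_triangle_fibres:
  assumes "a \<in> cube_vertices" "b \<in> cube_vertices" "c \<in> cube_vertices"
    and "a \<noteq> b" "b \<noteq> c" "a \<noteq> c"
  shows "{i. (a $ i = b $ i, a $ i = c $ i) = (False, False)} = private_coords {a, b, c} a"
    and "{i. (a $ i = b $ i, a $ i = c $ i) = (False, True)} = private_coords {a, b, c} b"
    and "{i. (a $ i = b $ i, a $ i = c $ i) = (True, False)} = private_coords {a, b, c} c"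
proof -
  have "\<forall>i. (a $ i = 0 \<or> a $ i = 1) \<and> (b $ i = 0 \<or> b $ i = 1) \<and> (c $ i = 0 \<or> c $ i = 1)"
    using assms(1-3) cube_vertex_coord by blast
  then show "{i. (a $ i = b $ i, a $ i = c $ i) = (False, False)} = private_coords {a, b, c} a"
    and "{i. (a $ i = b $ i, a $ i = c $ i) = (False, True)} = private_coords {a, b, c} b"
    and "{i. (a $ i = b $ i, a $ i = c $ i) = (True, False)} = private_coords {a, b, c} c"
    unfolding private_coords_triangle[OF assms(4-6)] by auto metis+
qed

lemma hyperoct_map_eqI:
  assumes "a \<in> cube_vertices" "a' \<in> cube_vertices" "x \<in> cube_vertices" "x' \<in> cube_vertices"
    and "\<And>i. a $ \<sigma> i = x $ \<sigma> i \<longleftrightarrow> a' $ i = x' $ i"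
  shows "hyperoct_map \<sigma> {i. a' $ i \<noteq> a $ \<sigma> i} x = x'"
proof (rule vec_eq_iff[THEN iffD2], rule allI)
  fix i
  show "hyperoct_map \<sigma> {i. a' $ i \<noteq> a $ \<sigma> i} x $ i = x' $ i"
    using assms(1,3)[THEN cube_vertex_coord, of "\<sigma> i"] assms(2,4)[THEN cube_vertex_coord, of i] assms(5)[of i]
    by auto
qed

lemma exists_hyperoct_map_triangle:
  assumes cube: "a \<in> cube_vertices" "b \<in> cube_vertices" "c \<in> cube_vertices"
      "a' \<in> cube_vertices" "b' \<in> cube_vertices" "c' \<in> cube_vertices"
    and distinct: "a \<noteq> b" "b \<noteq> c" "a \<noteq> c" "a' \<noteq> b'" "b' \<noteq> c'" "a' \<noteq> c'"
    and "card (private_coords {a, b, c} a) = card (private_coords {a', b', c'} a')"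
      "card (private_coords {a, b, c} b) = card (private_coords {a', b', c'} b')"
      "card (private_coords {a, b, c} c) = card (private_coords {a', b', c'} c')"
  shows "\<exists>g\<in>hyperoctahedral_group. g a = a' \<and> g b = b' \<and> g c = c'"
proof -
  \<comment> \<open>Label every coordinate by which of the three vertices, if any, is the odd one out there.\<close>
  define L where "L i = (a $ i = b $ i, a $ i = c $ i)" for i
  define L' where "L' i = (a' $ i = b' $ i, a' $ i = c' $ i)" for i
  have fibre_cards: "card {i. L i = k} = card {i. L' i = k}" if "k \<noteq> (True, True)" for k
  proof -
    have "k = (False, False) \<or> k = (False, True) \<or> k = (True, False)"
      using that by (cases k) auto
    then show ?thesis
      using private_coords_triangle_fibres[OF cube(1-3) distinct(1-3)]
        private_coords_triangle_fibres[OF cube(4-6) distinct(4-6)] assms(13-15)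
      unfolding L_def L'_def by auto
  qed
  have "card {i. L i = k} = card {i. L' i = k}" for k
    using fibre_cards card_fibre_eq_if_other_fibres_eq[of "(True, True)" L L', OF fibre_cards]
    by (cases "k = (True, True)") auto
  then obtain \<sigma> where \<sigma>: "\<sigma> permutes UNIV" "\<And>i. L (\<sigma> i) = L' i"
    using exists_permutes_fibres by blast
  have agree: "a $ \<sigma> i = b $ \<sigma> i \<longleftrightarrow> a' $ i = b' $ i" "a $ \<sigma> i = c $ \<sigma> i \<longleftrightarrow> a' $ i = c' $ i" for i
    using \<sigma>(2)[of i] by (simp_all add: L_def L'_def)
  let ?g = "hyperoct_map \<sigma> {i. a' $ i \<noteq> a $ \<sigma> i}"
  have "?g a = a'" "?g b = b'" "?g c = c'"
    by (rule hyperoct_map_eqI; use cube agree in simp)+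
  moreover have "?g \<in> hyperoctahedral_group"
    unfolding hyperoctahedral_group_def using \<sigma>(1) by blast
  ultimately show ?thesis by blast
qed

lemma add_mset_three_eqD:
  "{#x, y, z#} = {#x', y', z'#} \<Longrightarrow>
    (x = x' \<and> y = y' \<and> z = z') \<or> (x = x' \<and> y = z' \<and> z = y') \<or> (x = y' \<and> y = x' \<and> z = z') \<or>
    (x = y' \<and> y = z' \<and> z = x') \<or> (x = z' \<and> y = x' \<and> z = y') \<or> (x = z' \<and> y = y' \<and> z = x')"
  by (auto simp: add_eq_conv_ex)

lemma exists_hyperoct_map_image_triangle:
  assumes cube: "a \<in> cube_vertices" "b \<in> cube_vertices" "c \<in> cube_vertices"
      "a' \<in> cube_vertices" "b' \<in> cube_vertices" "c' \<in> cube_vertices"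
    and distinct: "a \<noteq> b" "b \<noteq> c" "a \<noteq> c" "a' \<noteq> b'" "b' \<noteq> c'" "a' \<noteq> c'"
    and "private_profile {a, b, c} = private_profile {a', b', c'}"
  shows "\<exists>g\<in>hyperoctahedral_group. g ` {a, b, c} = {a', b', c'}"
proof -
  let ?p = "\<lambda>v. card (private_coords {a, b, c} v)"
  let ?p' = "\<lambda>v. card (private_coords {a', b', c'} v)"
  have match: "\<exists>g\<in>hyperoctahedral_group. g ` {a, b, c} = {a', b', c'}"
    if xyz: "{x, y, z} = {a', b', c'}" "x \<noteq> y" "y \<noteq> z" "x \<noteq> z"
      "?p a = ?p' x" "?p b = ?p' y" "?p c = ?p' z" for x y z
  proof -
    have "{x, y, z} \<subseteq> cube_vertices"
      using xyz(1) cube(4-6) by simp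
    then have "x \<in> cube_vertices" "y \<in> cube_vertices" "z \<in> cube_vertices" by simp_all
    then obtain g where "g \<in> hyperoctahedral_group" "g a = x" "g b = y" "g c = z"
      using exists_hyperoct_map_triangle[OF cube(1-3), of x y z] xyz distinct(1-3) by auto
    then show ?thesis using xyz(1) by auto
  qed
  have "{#?p a, ?p b, ?p c#} = {#?p' a', ?p' b', ?p' c'#}"
    using assms(13) by (simp add: private_profile_triangle distinct)
  from add_mset_three_eqD[OF this] show ?thesis
    using match[of a' b' c'] match[of a' c' b'] match[of b' a' c']
      match[of b' c' a'] match[of c' a' b'] match[of c' b' a'] distinct
    by (elim disjE conjE) (simp_all add: insert_commute)
qed

lemma Bn_orbit_triangle_eq_iff:
  assumes cube: "a \<in> cube_vertices" "b \<in> cube_vertices" "c \<in> cube_vertices"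
      "a' \<in> cube_vertices" "b' \<in> cube_vertices" "c' \<in> cube_vertices"
    and distinct: "a \<noteq> b" "b \<noteq> c" "a \<noteq> c" "a' \<noteq> b'" "b' \<noteq> c'" "a' \<noteq> c'"
  shows "Bn_orbit (convex hull {a, b, c}) = Bn_orbit (convex hull {a', b', c'})
    \<longleftrightarrow> private_profile {a, b, c} = private_profile {a', b', c'}"
proof
  assume "Bn_orbit (convex hull {a, b, c}) = Bn_orbit (convex hull {a', b', c'})"
  then obtain g where g: "g \<in> hyperoctahedral_group" "convex hull {a, b, c} = g ` (convex hull {a', b', c'})"
    using self_in_Bn_orbit[of "convex hull {a, b, c}"] unfolding Bn_orbit_def by auto
  have "{a, b, c} = convex hull {a, b, c} \<inter> cube_vertices"
    using cube by (simp add: convex_hull_Int_cube_vertices)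
  also have "\<dots> = convex hull (g ` {a', b', c'}) \<inter> cube_vertices"
    by (simp add: g hyperoctahedral_group_image_convex_hull)
  also have "\<dots> = g ` {a', b', c'}"
    using cube g(1) by (simp add: convex_hull_Int_cube_vertices hyperoctahedral_group_cube_vertices)
  finally show "private_profile {a, b, c} = private_profile {a', b', c'}"
    using private_profile_hyperoctahedral_image[OF g(1), of "{a', b', c'}"] by simp
next
  assume profile: "private_profile {a, b, c} = private_profile {a', b', c'}"
  obtain g where "g \<in> hyperoctahedral_group" "g ` {a, b, c} = {a', b', c'}"
    using exists_hyperoct_map_image_triangle[OF cube distinct profile] by blast
  then have "Bn_orbit (convex hull {a', b', c'}) \<subseteq> Bn_orbit (convex hull {a, b, c})"
    by (metis Bn_orbit_image_subset hyperoctahedral_group_image_convex_hull)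
  moreover obtain h where "h \<in> hyperoctahedral_group" "h ` {a', b', c'} = {a, b, c}"
    using exists_hyperoct_map_image_triangle[OF cube(4-6) cube(1-3) distinct(4-6) distinct(1-3)]
      profile by metis
  then have "Bn_orbit (convex hull {a, b, c}) \<subseteq> Bn_orbit (convex hull {a', b', c'})"
    by (metis Bn_orbit_image_subset hyperoctahedral_group_image_convex_hull)
  ultimately show "Bn_orbit (convex hull {a, b, c}) = Bn_orbit (convex hull {a', b', c'})"
    by (rule subset_antisym[rotated])
qed

section \<open>Acute triangles\<close>

definition acute_triples :: "((real ^ 'n) \<times> (real ^ 'n) \<times> (real ^ 'n)) set" where
  "acute_triples = {(a, b, c). a \<in> cube_vertices \<and> b \<in> cube_vertices \<and> c \<in> cube_vertices
     \<and> a \<noteq> b \<and> b \<noteq> c \<and> a \<noteq> c \<and> private_coords {a, b, c} a \<noteq> {}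
     \<and> private_coords {a, b, c} b \<noteq> {} \<and> private_coords {a, b, c} c \<noteq> {}}"

lemma vertex_angle_cube_less_pi_half_iff:
  assumes "a \<in> cube_vertices" "b \<in> cube_vertices" "c \<in> cube_vertices" "a \<noteq> b" "a \<noteq> c"
  shows "vertex_angle a b c < pi / 2 \<longleftrightarrow> (\<exists>i. a $ i \<noteq> b $ i \<and> a $ i \<noteq> c $ i)"
  using vertex_angle_less_pi_half_iff[of b a c] inner_cube_vertices[OF assms(1-3)] assms(4,5)
  by (simp add: card_gt_0_iff)

lemma acute_zo_triangle_iff:
  "acute_zo_triangle T \<longleftrightarrow> (\<exists>(a, b, c) \<in> acute_triples. T = convex hull {a, b, c})"
proof -
  have angles: "vertex_angle a b c < pi / 2 \<and> vertex_angle b a c < pi / 2 \<and> vertex_angle c a b < pi / 2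
    \<longleftrightarrow> private_coords {a, b, c} a \<noteq> {} \<and> private_coords {a, b, c} b \<noteq> {}
      \<and> private_coords {a, b, c} c \<noteq> {}"
    if "a \<in> cube_vertices" "b \<in> cube_vertices" "c \<in> cube_vertices" "a \<noteq> b" "b \<noteq> c" "a \<noteq> c"
    for a b c :: "real ^ 'n"
    using vertex_angle_cube_less_pi_half_iff[of a b c] vertex_angle_cube_less_pi_half_iff[of b a c]
      vertex_angle_cube_less_pi_half_iff[of c a b] that private_coords_triangle[OF that(4-6)]
    by auto
  show ?thesis
  proof
    assume "acute_zo_triangle T"
    then obtain a b c where "a \<in> cube_vertices" "b \<in> cube_vertices" "c \<in> cube_vertices"
      "a \<noteq> b" "b \<noteq> c" "a \<noteq> c" "T = convex hull {a, b, c}"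
      "vertex_angle a b c < pi / 2" "vertex_angle b a c < pi / 2" "vertex_angle c a b < pi / 2"
      unfolding acute_zo_triangle_def by blast
    with angles show "\<exists>(a, b, c) \<in> acute_triples. T = convex hull {a, b, c}"
      unfolding acute_triples_def by blast
  next
    assume "\<exists>(a, b, c) \<in> acute_triples. T = convex hull {a, b, c}"
    with angles show "acute_zo_triangle T"
      unfolding acute_triples_def acute_zo_triangle_def by blast
  qed
qed

definition positive_triple_msets :: "nat \<Rightarrow> nat multiset set" where
  "positive_triple_msets N = {{#x, y, z#} | x y z. 0 < x \<and> 0 < y \<and> 0 < z \<and> x + y + z \<le> N}"

lemma private_profile_acute_triple:
  fixes a b c :: "real ^ 'n"
  assumes "(a, b, c) \<in> acute_triples"
  shows "private_profile {a, b, c} \<in> positive_triple_msets CARD('n)"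
proof -
  let ?P = "private_coords {a, b, c}"
  have cube: "{a, b, c} \<subseteq> cube_vertices" and distinct: "a \<noteq> b" "b \<noteq> c" "a \<noteq> c"
    and nonempty: "?P a \<noteq> {}" "?P b \<noteq> {}" "?P c \<noteq> {}"
    using assms by (auto simp: acute_triples_def)
  have "?P a \<inter> ?P b = {}" "?P a \<inter> ?P c = {}" "?P b \<inter> ?P c = {}"
    using private_coords_disjoint[OF cube, of a b c] private_coords_disjoint[OF cube, of a c b]
      private_coords_disjoint[OF cube, of b c a] distinct by auto
  then have "card (?P a) + card (?P b) + card (?P c) = card (?P a \<union> ?P b \<union> ?P c)"
    by (simp add: card_Un_disjoint Int_Un_distrib2)
  also have "\<dots> \<le> CARD('n)" by (rule card_mono) auto
  finally have "card (?P a) + card (?P b) + card (?P c) \<le> CARD('n)" .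
  moreover have "0 < card (?P a)" "0 < card (?P b)" "0 < card (?P c)"
    using nonempty by (simp_all add: card_gt_0_iff)
  ultimately show ?thesis
    unfolding positive_triple_msets_def private_profile_triangle[OF distinct] by blast
qed

lemma acute_triple_with_profile:
  assumes "0 < x" "0 < y" "0 < z" "x + y + z \<le> CARD('n)"
  obtains a b c :: "real ^ 'n"
  where "(a, b, c) \<in> acute_triples" "private_profile {a, b, c} = {#x, y, z#}"
proof -
  obtain A :: "'n set" where A: "card A = x"
    by (rule obtain_subset_with_card_n[of x UNIV]) (use assms(4) in auto)
  obtain B where B: "B \<subseteq> UNIV - A" "card B = y"
    by (rule obtain_subset_with_card_n[of y "UNIV - A"]) (use assms(4) in \<open>auto simp: card_Diff_subset A\<close>)
  have AB: "card (A \<union> B) = x + y"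
    using A B by (subst card_Un_disjoint) auto
  obtain C where C: "C \<subseteq> UNIV - (A \<union> B)" "card C = z"
    by (rule obtain_subset_with_card_n[of z "UNIV - (A \<union> B)"])
      (use assms(4) AB in \<open>auto simp: card_Diff_subset\<close>)
  define a :: "real ^ 'n" where "a = 0"
  define b :: "real ^ 'n" where "b = (\<chi> i. if i \<in> A \<union> B then 1 else 0)"
  define c :: "real ^ 'n" where "c = (\<chi> i. if i \<in> A \<union> C then 1 else 0)"
  have nonempty: "A \<noteq> {}" "B \<noteq> {}" "C \<noteq> {}"
    using A B C assms(1-3) by auto
  have distinct: "a \<noteq> b" "b \<noteq> c" "a \<noteq> c"
    using nonempty B(1) C(1) by (auto simp: a_def b_def c_def vec_eq_iff)
  have odd_one_out: "private_coords {a, b, c} a = A" "private_coords {a, b, c} b = B"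
    "private_coords {a, b, c} c = C"
    unfolding private_coords_triangle[OF distinct] using B(1) C(1) by (auto simp: a_def b_def c_def)
  have "{a, b, c} \<subseteq> cube_vertices"
    by (auto simp: cube_vertices_def a_def b_def c_def)
  then have "(a, b, c) \<in> acute_triples"
    unfolding acute_triples_def using distinct odd_one_out nonempty by simp
  moreover have "private_profile {a, b, c} = {#x, y, z#}"
    using private_profile_triangle[OF distinct] odd_one_out A B(2) C(2) by simp
  ultimately show thesis by (rule that)
qed

lemma private_profile_image_acute_triples:
  "(\<lambda>(a, b, c). private_profile {a, b, c}) ` (acute_triples :: ((real ^ 'n) \<times> _ \<times> _) set)
    = positive_triple_msets CARD('n)"
proof
  show "(\<lambda>(a, b, c). private_profile {a, b, c}) ` (acute_triples :: ((real ^ 'n) \<times> _ \<times> _) set)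
      \<subseteq> positive_triple_msets CARD('n)"
    using private_profile_acute_triple by auto
next
  show "positive_triple_msets CARD('n)
      \<subseteq> (\<lambda>(a, b, c). private_profile {a, b, c}) ` (acute_triples :: ((real ^ 'n) \<times> _ \<times> _) set)"
  proof
    fix M assume "M \<in> positive_triple_msets CARD('n)"
    then obtain x y z where M: "M = {#x, y, z#}" "0 < x" "0 < y" "0 < z" "x + y + z \<le> CARD('n)"
      unfolding positive_triple_msets_def by blast
    obtain a b c :: "real ^ 'n" where "(a, b, c) \<in> acute_triples" "private_profile {a, b, c} = M"
      using acute_triple_with_profile[OF M(2-5)] M(1) by metis
    then show "M \<in> (\<lambda>(a, b, c). private_profile {a, b, c}) ` (acute_triples :: ((real ^ 'n) \<times> _ \<times> _) set)"
      by force
  qed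
qed

section \<open>Counting\<close>

lemma exists_sorted_add_mset_three:
  fixes x y z :: "'a::linorder"
  obtains p q r where "{#x, y, z#} = {#p, q, r#}" "p \<le> q" "q \<le> r"
proof -
  have "(x \<le> y \<and> y \<le> z) \<or> (x \<le> z \<and> z \<le> y) \<or> (y \<le> x \<and> x \<le> z) \<or>
      (y \<le> z \<and> z \<le> x) \<or> (z \<le> x \<and> x \<le> y) \<or> (z \<le> y \<and> y \<le> x)"
    by auto
  then show thesis
    using that[of x y z] that[of x z y] that[of y x z] that[of y z x] that[of z x y] that[of z y x]
    by (auto simp: add_mset_commute)
qed

definition sorted_triples :: "nat \<Rightarrow> (nat \<times> nat \<times> nat) set" where
  "sorted_triples N = {(x, y, z). 0 < x \<and> x \<le> y \<and> y \<le> z \<and> x + y + z \<le> N}"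

lemma card_positive_triple_msets: "card (positive_triple_msets N) = card (sorted_triples N)"
proof -
  let ?mset = "\<lambda>(x, y, z). {#x, y, z#}"
  have "positive_triple_msets N = ?mset ` sorted_triples N"
  proof
    show "?mset ` sorted_triples N \<subseteq> positive_triple_msets N"
      by (fastforce simp: positive_triple_msets_def sorted_triples_def)
  next
    show "positive_triple_msets N \<subseteq> ?mset ` sorted_triples N"
    proof
      fix M assume "M \<in> positive_triple_msets N"
      then obtain x y z where M: "M = {#x, y, z#}" "0 < x" "0 < y" "0 < z" "x + y + z \<le> N"
        unfolding positive_triple_msets_def by blast
      obtain p q r where sorted: "M = {#p, q, r#}" "p \<le> q" "q \<le> r"
        using exists_sorted_add_mset_three M(1) by metis
      have "set_mset {#p, q, r#} = {x, y, z}" "sum_mset {#p, q, r#} = x + y + z"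
        using M(1) sorted(1) by simp_all
      then have "(p, q, r) \<in> sorted_triples N"
        using M(2-5) sorted(2,3) by (auto simp: sorted_triples_def)
      then show "M \<in> ?mset ` sorted_triples N"
        using sorted(1) by force
    qed
  qed
  moreover have "inj_on ?mset (sorted_triples N)"
  proof (rule inj_onI)
    fix u v assume "u \<in> sorted_triples N" "v \<in> sorted_triples N" "?mset u = ?mset v"
    then show "u = v"
      by (auto simp: sorted_triples_def dest!: add_mset_three_eqD)
  qed
  ultimately show ?thesis by (simp add: card_image)
qed

definition sorted_pairs :: "nat \<Rightarrow> (nat \<times> nat) set" where
  "sorted_pairs M = {(y, z). 0 < y \<and> y \<le> z \<and> y + z \<le> M}"

lemma finite_sorted_pairs: "finite (sorted_pairs M)"
  by (rule finite_subset[of _ "{..M} \<times> {..M}"]) (auto simp: sorted_pairs_def)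

lemma finite_sorted_triples: "finite (sorted_triples N)"
  by (rule finite_subset[of _ "{..N} \<times> {..N} \<times> {..N}"]) (auto simp: sorted_triples_def)

lemma sorted_pairs_add_two:
  "sorted_pairs (M + 2) = (\<lambda>z. (1, z)) ` {1..M + 1} \<union> (\<lambda>(y, z). (y + 1, z + 1)) ` sorted_pairs M"
proof
  show "sorted_pairs (M + 2) \<subseteq> (\<lambda>z. (1, z)) ` {1..M + 1} \<union> (\<lambda>(y, z). (y + 1, z + 1)) ` sorted_pairs M"
  proof
    fix p assume "p \<in> sorted_pairs (M + 2)"
    then obtain y z where p: "p = (y, z)" "0 < y" "y \<le> z" "y + z \<le> M + 2"
      by (auto simp: sorted_pairs_def)
    show "p \<in> (\<lambda>z. (1, z)) ` {1..M + 1} \<union> (\<lambda>(y, z). (y + 1, z + 1)) ` sorted_pairs M"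
    proof (cases "y = 1")
      case True
      then show ?thesis using p by auto
    next
      case False
      then have "(y - 1, z - 1) \<in> sorted_pairs M" using p by (auto simp: sorted_pairs_def)
      moreover have "p = (\<lambda>(y, z). (y + 1, z + 1)) (y - 1, z - 1)" using p False by auto
      ultimately show ?thesis by blast
    qed
  qed
qed (auto simp: sorted_pairs_def)

lemma card_sorted_pairs_add_two: "card (sorted_pairs (M + 2)) = M + 1 + card (sorted_pairs M)"
proof -
  have "inj_on (\<lambda>(y, z). (y + 1, z + 1)) (sorted_pairs M)" by (auto simp: inj_on_def)
  moreover have "card ((\<lambda>z. (1::nat, z)) ` {1..M + 1}) = M + 1"
    by (subst card_image) (auto simp: inj_on_def)
  moreover have "(\<lambda>z. (1, z)) ` {1..M + 1} \<inter> (\<lambda>(y, z). (y + 1, z + 1)) ` sorted_pairs M = {}"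
    by (auto simp: sorted_pairs_def)
  ultimately show ?thesis
    unfolding sorted_pairs_add_two by (simp add: card_Un_disjoint finite_sorted_pairs card_image)
qed

lemma card_sorted_pairs: "4 * card (sorted_pairs M) + M mod 2 = M ^ 2"
proof (induction M rule: less_induct)
  case (less M)
  show ?case
  proof (cases "M < 2")
    case True
    then have "sorted_pairs M = {}" by (auto simp: sorted_pairs_def)
    with True show ?thesis by (cases M) (auto simp: power2_eq_square)
  next
    case False
    then obtain K where K: "M = K + 2" by (metis add.commute le_Suc_ex not_less)
    have "4 * card (sorted_pairs K) + K mod 2 = K ^ 2" using less K by simp
    then show ?thesis unfolding K card_sorted_pairs_add_two by (simp add: power2_eq_square algebra_simps)
  qed
qed

lemma sorted_triples_add_three:
  "sorted_triples (N + 3)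
    = (\<lambda>(y, z). (1, y, z)) ` sorted_pairs (N + 2) \<union> (\<lambda>(x, y, z). (x + 1, y + 1, z + 1)) ` sorted_triples N"
proof
  show "sorted_triples (N + 3) \<subseteq> (\<lambda>(y, z). (1, y, z)) ` sorted_pairs (N + 2)
      \<union> (\<lambda>(x, y, z). (x + 1, y + 1, z + 1)) ` sorted_triples N"
  proof
    fix p assume "p \<in> sorted_triples (N + 3)"
    then obtain x y z where p: "p = (x, y, z)" "0 < x" "x \<le> y" "y \<le> z" "x + y + z \<le> N + 3"
      by (auto simp: sorted_triples_def)
    show "p \<in> (\<lambda>(y, z). (1, y, z)) ` sorted_pairs (N + 2)
        \<union> (\<lambda>(x, y, z). (x + 1, y + 1, z + 1)) ` sorted_triples N"
    proof (cases "x = 1")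
      case True
      then have "(y, z) \<in> sorted_pairs (N + 2)" using p by (auto simp: sorted_pairs_def)
      then show ?thesis using True p by force
    next
      case False
      then have "(x - 1, y - 1, z - 1) \<in> sorted_triples N" using p by (auto simp: sorted_triples_def)
      moreover have "p = (\<lambda>(x, y, z). (x + 1, y + 1, z + 1)) (x - 1, y - 1, z - 1)" using p False by auto
      ultimately show ?thesis by blast
    qed
  qed
qed (auto simp: sorted_pairs_def sorted_triples_def)

lemma card_sorted_triples_add_three:
  "card (sorted_triples (N + 3)) = card (sorted_pairs (N + 2)) + card (sorted_triples N)"
proof -
  have "inj_on (\<lambda>(y, z). (1::nat, y, z)) (sorted_pairs (N + 2))" by (auto simp: inj_on_def)
  moreover have "inj_on (\<lambda>(x, y, z). (x + 1, y + 1, z + 1)) (sorted_triples N)" by (auto simp: inj_on_def)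
  moreover have "(\<lambda>(y, z). (1, y, z)) ` sorted_pairs (N + 2)
      \<inter> (\<lambda>(x, y, z). (x + 1, y + 1, z + 1)) ` sorted_triples N = {}"
    by (auto simp: sorted_triples_def)
  ultimately show ?thesis
    unfolding sorted_triples_add_three
    by (simp add: card_Un_disjoint finite_sorted_pairs finite_sorted_triples card_image)
qed

text \<open>The remainder of \<open>2 N\<^sup>3 + 3 N\<^sup>2 - 6 N + 9\<close> modulo 72, which depends only on \<open>N mod 6\<close>.\<close>
definition cubic_remainder :: "nat \<Rightarrow> nat" where
  "cubic_remainder N = (if N mod 6 = 0 then 9 else if N mod 6 = 1 then 8 else if N mod 6 = 2 then 25
    else if N mod 6 = 3 then 0 else if N mod 6 = 4 then 17 else 16)"

lemma cubic_remainder_add_three: "cubic_remainder (N + 3) + 9 = cubic_remainder N + 18 * (N mod 2)"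
proof -
  define k where "k = N mod 6"
  have "N mod 2 = k mod 2" "(N + 3) mod 6 = (k + 3) mod 6"
    by (simp_all add: k_def mod_mod_cancel mod_add_left_eq)
  moreover have "k = 0 \<or> k = 1 \<or> k = 2 \<or> k = 3 \<or> k = 4 \<or> k = 5"
    unfolding k_def by linarith
  ultimately show ?thesis
    unfolding cubic_remainder_def k_def[symmetric] by auto
qed

lemma card_sorted_triples:
  "72 * int (card (sorted_triples N)) + int (cubic_remainder N) = 2 * int N ^ 3 + 3 * int N ^ 2 - 6 * int N + 9"
proof (induction N rule: less_induct)
  case (less N)
  show ?case
  proof (cases "N < 3")
    case True
    then have "sorted_triples N = {}" by (auto simp: sorted_triples_def)
    with True show ?thesis by (cases N; cases "N - 1"; cases "N - 2") (auto simp: cubic_remainder_def)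
  next
    case False
    then obtain K where K: "N = K + 3" by (metis add.commute le_Suc_ex not_less)
    have "72 * int (card (sorted_triples K)) + int (cubic_remainder K)
        = 2 * int K ^ 3 + 3 * int K ^ 2 - 6 * int K + 9"
      using less K by simp
    moreover have "4 * int (card (sorted_pairs (K + 2))) + int ((K + 2) mod 2) = int (K + 2) ^ 2"
      using card_sorted_pairs[of "K + 2"] by (metis of_nat_add of_nat_mult of_nat_numeral of_nat_power)
    moreover have "int (cubic_remainder (K + 3)) + 9 = int (cubic_remainder K) + 18 * int (K mod 2)"
      using cubic_remainder_add_three[of K] by (metis of_nat_add of_nat_mult of_nat_numeral)
    moreover have "(K + 2) mod 2 = K mod 2" by simp
    ultimately show ?thesis
      unfolding K card_sorted_triples_add_three by (simp add: power2_eq_square power3_eq_cube algebra_simps)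
  qed
qed

lemma card_sorted_triples_eq_floor:
  "int (card (sorted_triples N)) = \<lfloor>(2 * real N ^ 3 + 3 * real N ^ 2 - 6 * real N + 9) / 72\<rfloor>"
proof -
  have "2 * real N ^ 3 + 3 * real N ^ 2 - 6 * real N + 9
      = 72 * real (card (sorted_triples N)) + real (cubic_remainder N)"
    using arg_cong[OF card_sorted_triples[of N], of real_of_int] by simp
  moreover have "cubic_remainder N < 72" by (simp add: cubic_remainder_def)
  ultimately show ?thesis
    by (intro sym[OF floor_unique]) (auto simp: field_simps)
qed

lemma card_image_eq_if_same_kernel:
  assumes "\<And>x y. x \<in> D \<Longrightarrow> y \<in> D \<Longrightarrow> f x = f y \<longleftrightarrow> h x = h y"
  shows "card (f ` D) = card (h ` D)"
proof -
  let ?P = "(\<lambda>x. (f x, h x)) ` D"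
  have "inj_on fst ?P" "inj_on snd ?P" using assms by (auto simp: inj_on_def)
  moreover have "fst ` ?P = f ` D" "snd ` ?P = h ` D" by (auto simp: image_image)
  ultimately show ?thesis by (metis card_image)
qed

theorem theorem4p23:
  "int (card {Bn_orbit T | T :: (real ^ 'n) set. acute_zo_triangle T})
     = \<lfloor>(2 * real CARD('n) ^ 3 + 3 * real CARD('n) ^ 2 - 6 * real CARD('n) + 9) / 72\<rfloor>"
proof -
  let ?A = "acute_triples :: ((real ^ 'n) \<times> (real ^ 'n) \<times> (real ^ 'n)) set"
  let ?orbit = "\<lambda>(a, b, c). Bn_orbit (convex hull {a, b, c})"
  let ?profile = "\<lambda>(a, b, c). private_profile {a, b, c}"
  have "{Bn_orbit T | T :: (real ^ 'n) set. acute_zo_triangle T} = ?orbit ` ?A"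
    by (auto simp: acute_zo_triangle_iff)
  moreover have "card (?orbit ` ?A) = card (?profile ` ?A)"
    by (rule card_image_eq_if_same_kernel) (clarsimp simp: acute_triples_def Bn_orbit_triangle_eq_iff)
  moreover have "card (?profile ` ?A) = card (sorted_triples CARD('n))"
    by (simp add: private_profile_image_acute_triples card_positive_triple_msets)
  ultimately show ?thesis by (simp add: card_sorted_triples_eq_floor)
qed

end
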